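(* The translation of LTL formulas whose languages are recognizable by deterministic co-Büchi word automata into GFG-NSWs is doubly exponential: in the worst case, a GFG-NSW equivalent to such a formula requires a number of states doubly exponential in the length of the formula.
   Context: LTL is linear temporal logic; the language of an LTL formula over atomic propositions $AP$ is the set of infinite words over $2^{AP}$ satisfying it. An NSW is a nondeterministic Streett word automaton $\langle\Sigma,Q,Q_0,\delta,\alpha\rangle$ with $\delta:Q\times\Sigma\to2^Q$ and $\alpha$ a set of pairs $\langle E,F\rangle$; a run is accepting iff for every pair the set $S$ of infinitely visited states satisfies $S\cap E=\emptyset$ or $S\cap F\ne\emptyset$. A deterministic co-Büchi word automaton (DCW) is a deterministic automaton with $\alpha\subseteq Q$ accepting runs that visit $\alpha$ only finitely often. An automaton is GFG if there is a strategy $g:\Sigma^*\to Q$ such that for every $w=a_1a_2\cdots$, $g(\epsilon),g(a_1),g(a_1a_2),\ldots$ is a run on $w$, accepting whenever $w$ is in the language. *)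

theory Defs
  imports Main
begin

datatype 'ap ltl =
    LTrue
  | Prop 'ap
  | LNot "'ap ltl"
  | LAnd "'ap ltl" "'ap ltl"
  | LNext "'ap ltl"
  | LUntil "'ap ltl" "'ap ltl"

fun ltl_length :: "'ap ltl \<Rightarrow> nat" where
  "ltl_length LTrue = 1"
| "ltl_length (Prop a) = 1"
| "ltl_length (LNot f) = 1 + ltl_length f"
| "ltl_length (LAnd f g) = 1 + ltl_length f + ltl_length g"
| "ltl_length (LNext f) = 1 + ltl_length f"
| "ltl_length (LUntil f g) = 1 + ltl_length f + ltl_length g"

fun ltl_props :: "'ap ltl \<Rightarrow> 'ap set" where
  "ltl_props LTrue = {}"
| "ltl_props (Prop a) = {a}"
| "ltl_props (LNot f) = ltl_props f"
| "ltl_props (LAnd f g) = ltl_props f \<union> ltl_props g"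
| "ltl_props (LNext f) = ltl_props f"
| "ltl_props (LUntil f g) = ltl_props f \<union> ltl_props g"

type_synonym 'a word = "nat \<Rightarrow> 'a"

definition suffix_w :: "nat \<Rightarrow> 'a word \<Rightarrow> 'a word" where
  "suffix_w i w = (\<lambda>j. w (i + j))"

fun ltl_sat :: "'ap set word \<Rightarrow> 'ap ltl \<Rightarrow> bool" where
  "ltl_sat w LTrue = True"
| "ltl_sat w (Prop a) = (a \<in> w 0)"
| "ltl_sat w (LNot f) = (\<not> ltl_sat w f)"
| "ltl_sat w (LAnd f g) = (ltl_sat w f \<and> ltl_sat w g)"
| "ltl_sat w (LNext f) = ltl_sat (suffix_w 1 w) f"
| "ltl_sat w (LUntil f g) =
     (\<exists>k. ltl_sat (suffix_w k w) g \<and> (\<forall>j<k. ltl_sat (suffix_w j w) f))"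

definition words_over :: "'a set \<Rightarrow> 'a word set" where
  "words_over \<Sigma> = {w. \<forall>i. w i \<in> \<Sigma>}"

definition ltl_lang :: "'ap set \<Rightarrow> 'ap ltl \<Rightarrow> 'ap set word set" where
  "ltl_lang AP f = {w \<in> words_over (Pow AP). ltl_sat w f}"

text \<open>States are taken from nat; every finite automaton is isomorphic to one of this form.\<close>
record 'a nsw =
  nsw_alph :: "'a set"
  nsw_states :: "nat set"
  nsw_init :: "nat set"
  nsw_delta :: "nat \<Rightarrow> 'a \<Rightarrow> nat set"
  nsw_acc :: "(nat set \<times> nat set) set"

definition nsw_wf :: "'a nsw \<Rightarrow> bool" where
  "nsw_wf A \<longleftrightarrow> finite (nsw_states A) \<and> nsw_init A \<subseteq> nsw_states A
     \<and> (\<forall>q \<in> nsw_states A. \<forall>a \<in> nsw_alph A. nsw_delta A q a \<subseteq> nsw_states A)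
     \<and> (\<forall>(E,F) \<in> nsw_acc A. E \<subseteq> nsw_states A \<and> F \<subseteq> nsw_states A)"

definition inf_set :: "nat word \<Rightarrow> nat set" where
  "inf_set r = {q. \<exists>\<^sub>\<infinity>i. r i = q}"

definition nsw_run :: "'a nsw \<Rightarrow> 'a word \<Rightarrow> nat word \<Rightarrow> bool" where
  "nsw_run A w r \<longleftrightarrow> r 0 \<in> nsw_init A \<and> (\<forall>i. r (Suc i) \<in> nsw_delta A (r i) (w i))"

definition streett_accepting :: "'a nsw \<Rightarrow> nat word \<Rightarrow> bool" where
  "streett_accepting A r \<longleftrightarrow>
     (\<forall>(E,F) \<in> nsw_acc A. inf_set r \<inter> E = {} \<or> inf_set r \<inter> F \<noteq> {})"

definition nsw_lang :: "'a nsw \<Rightarrow> 'a word set" where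
  "nsw_lang A = {w \<in> words_over (nsw_alph A).
      \<exists>r. nsw_run A w r \<and> streett_accepting A r}"

definition prefix_w :: "nat \<Rightarrow> 'a word \<Rightarrow> 'a list" where
  "prefix_w i w = map w [0..<i]"

definition nsw_gfg :: "'a nsw \<Rightarrow> bool" where
  "nsw_gfg A \<longleftrightarrow> (\<exists>g :: 'a list \<Rightarrow> nat.
     \<forall>w \<in> words_over (nsw_alph A).
       nsw_run A w (\<lambda>i. g (prefix_w i w)) \<and>
       (w \<in> nsw_lang A \<longrightarrow> streett_accepting A (\<lambda>i. g (prefix_w i w))))"

record 'a dcw =
  dcw_alph :: "'a set"
  dcw_states :: "nat set"
  dcw_init :: nat
  dcw_delta :: "nat \<Rightarrow> 'a \<Rightarrow> nat"
  dcw_acc :: "nat set"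

definition dcw_wf :: "'a dcw \<Rightarrow> bool" where
  "dcw_wf D \<longleftrightarrow> finite (dcw_states D) \<and> dcw_init D \<in> dcw_states D
     \<and> (\<forall>q \<in> dcw_states D. \<forall>a \<in> dcw_alph D. dcw_delta D q a \<in> dcw_states D)
     \<and> dcw_acc D \<subseteq> dcw_states D"

fun dcw_run :: "'a dcw \<Rightarrow> 'a word \<Rightarrow> nat \<Rightarrow> nat" where
  "dcw_run D w 0 = dcw_init D"
| "dcw_run D w (Suc i) = dcw_delta D (dcw_run D w i) (w i)"

definition dcw_lang :: "'a dcw \<Rightarrow> 'a word set" where
  "dcw_lang D = {w \<in> words_over (dcw_alph D).
      finite {i. dcw_run D w i \<in> dcw_acc D}}"

definition dcw_recognizable :: "'a set \<Rightarrow> 'a word set \<Rightarrow> bool" where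
  "dcw_recognizable \<Sigma> L \<longleftrightarrow>
     (\<exists>D. dcw_wf D \<and> dcw_alph D = \<Sigma> \<and> dcw_lang D = L)"

end

theory Submission
  imports Defs "HOL-Library.Omega_Words_Fun" "HOL-Library.Countable_Set"
begin

text \<open>Over the propositions \<open>{0..n}\<close>, read \<open>n\<close> as a marker and the propositions below \<open>n\<close> as
  an \<open>n\<close>-bit vector. A word has an echo if the bit vector of some unmarked letter reappears at
  the first marked letter after it. A linear-size LTL formula says this, and a deterministic
  co-Buchi automaton recognizes it by storing the set of bit vectors read since the last marker,
  moving to a sink once an echo occurs.

  In a GFG automaton the strategy must reach different states after unmarked blocks listing
  different sets \<open>S\<close>, \<open>T\<close> of bit vectors: for \<open>v\<close> in \<open>S\<close> but not in \<open>T\<close>, appending \<open>v\<close> marked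
  and then only markers yields an echo after \<open>S\<close> but not after \<open>T\<close>, whereas from a common state
  the accepting run on the first word could be grafted onto the strategy's run on the second.
  Hence there are at least \<open>2^2^n\<close> states.\<close>

section \<open>Streett automata and good-for-games strategies\<close>

lemma suffix_w_eq_suffix: "suffix_w = suffix"
  by (simp add: fun_eq_iff suffix_w_def suffix_def)

lemma prefix_w_eq_prefix: "prefix_w = prefix"
  by (simp add: fun_eq_iff prefix_w_def subsequence_def)

lemma inf_set_eq_limit: "inf_set = limit"
  by (simp add: fun_eq_iff inf_set_def limit_def)

lemma words_over_iff_range: "w \<in> words_over \<Sigma> \<longleftrightarrow> range w \<subseteq> \<Sigma>"
  by (auto simp: words_over_def)

lemma nsw_run_in_states:
  assumes "nsw_wf A" "nsw_run A w r" "w \<in> words_over (nsw_alph A)"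
  shows "r k \<in> nsw_states A"
proof (induction k)
  case 0
  then show ?case using assms(1,2) by (auto simp: nsw_wf_def nsw_run_def)
next
  case (Suc k)
  have "r (Suc k) \<in> nsw_delta A (r k) (w k)" "w k \<in> nsw_alph A"
    using assms(2,3) by (auto simp: nsw_run_def words_over_def)
  then show ?case using assms(1) Suc by (auto simp: nsw_wf_def)
qed

lemma nsw_run_splice:
  assumes r: "nsw_run A (u \<frown> x) r" and r': "nsw_run A (u' \<frown> x) r'"
    and meet: "r (length u) = r' (length u')"
  shows "nsw_run A (u' \<frown> x) (prefix (length u') r' \<frown> suffix (length u) r)"
proof -
  let ?s = "prefix (length u') r' \<frown> suffix (length u) r"
  have early: "?s i = r' i" if "i \<le> length u'" for i
    using that meet by (cases "i < length u'") auto
  have late: "?s (length u' + k) = r (length u + k)" for k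
    by simp
  show ?thesis
    unfolding nsw_run_def
  proof (intro conjI allI)
    show "?s 0 \<in> nsw_init A"
      using early[of 0] r' by (simp add: nsw_run_def)
    fix i
    show "?s (Suc i) \<in> nsw_delta A (?s i) ((u' \<frown> x) i)"
    proof (cases "i < length u'")
      case True
      then have "?s i = r' i" "?s (Suc i) = r' (Suc i)"
        using early by auto
      moreover have "r' (Suc i) \<in> nsw_delta A (r' i) ((u' \<frown> x) i)"
        using r' unfolding nsw_run_def by blast
      ultimately show ?thesis by simp
    next
      case False
      then obtain k where i: "i = length u' + k" by (metis le_Suc_ex not_less)
      have "r (Suc (length u + k)) \<in> nsw_delta A (r (length u + k)) ((u \<frown> x) (length u + k))"
        using r unfolding nsw_run_def by blast
      then show ?thesis using late[of k] late[of "Suc k"] by (simp add: i)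
    qed
  qed
qed

definition gfg_strategy :: "'a nsw \<Rightarrow> ('a list \<Rightarrow> nat) \<Rightarrow> bool" where
  "gfg_strategy A g \<longleftrightarrow> (\<forall>w \<in> words_over (nsw_alph A).
     nsw_run A w (\<lambda>i. g (prefix i w)) \<and>
     (w \<in> nsw_lang A \<longrightarrow> streett_accepting A (\<lambda>i. g (prefix i w))))"

lemma nsw_gfg_iff_strategy: "nsw_gfg A \<longleftrightarrow> (\<exists>g. gfg_strategy A g)"
  by (simp add: nsw_gfg_def gfg_strategy_def prefix_w_eq_prefix)

lemma gfg_strategy_state:
  assumes "nsw_wf A" "gfg_strategy A g" "u \<frown> x \<in> words_over (nsw_alph A)"
  shows "g u \<in> nsw_states A"
proof -
  have "nsw_run A (u \<frown> x) (\<lambda>i. g (prefix i (u \<frown> x)))"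
    using assms(2,3) by (simp add: gfg_strategy_def)
  from nsw_run_in_states[OF assms(1) this assms(3), of "length u"] show ?thesis
    by simp
qed

lemma gfg_strategy_residual:
  assumes g: "gfg_strategy A g" and same_state: "g u = g u'"
    and accepted: "u \<frown> x \<in> nsw_lang A" and word: "u' \<frown> x \<in> words_over (nsw_alph A)"
  shows "u' \<frown> x \<in> nsw_lang A"
proof -
  define r where "r = (\<lambda>i. g (prefix i (u \<frown> x)))"
  define r' where "r' = (\<lambda>i. g (prefix i (u' \<frown> x)))"
  have "u \<frown> x \<in> words_over (nsw_alph A)"
    using accepted by (simp add: nsw_lang_def)
  then have run: "nsw_run A (u \<frown> x) r" and acc: "streett_accepting A r"
    using g accepted by (auto simp: gfg_strategy_def r_def)
  have run': "nsw_run A (u' \<frown> x) r'"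
    using g word by (simp add: gfg_strategy_def r'_def)
  have "r (length u) = r' (length u')"
    using same_state by (simp add: r_def r'_def)
  with run run' have "nsw_run A (u' \<frown> x) (prefix (length u') r' \<frown> suffix (length u) r)"
    by (rule nsw_run_splice)
  moreover have "streett_accepting A (prefix (length u') r' \<frown> suffix (length u) r)"
    using acc by (simp add: streett_accepting_def inf_set_eq_limit)
  ultimately show ?thesis
    using word by (auto simp: nsw_lang_def)
qed

lemma gfg_card_states_ge_fooling_set:
  assumes wf: "nsw_wf A" and g: "gfg_strategy A g" and alph: "nsw_alph A \<noteq> {}"
    and prefixes: "\<And>i. i \<in> I \<Longrightarrow> set (u i) \<subseteq> nsw_alph A"
    and fooling: "\<And>i j. i \<in> I \<Longrightarrow> j \<in> I \<Longrightarrow> i \<noteq> j \<Longrightarrow>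
      \<exists>x \<in> words_over (nsw_alph A). (u i \<frown> x \<in> nsw_lang A) \<noteq> (u j \<frown> x \<in> nsw_lang A)"
  shows "card I \<le> card (nsw_states A)"
proof -
  have word: "u i \<frown> x \<in> words_over (nsw_alph A)" if "i \<in> I" "x \<in> words_over (nsw_alph A)" for i x
    using prefixes[OF that(1)] that(2) by (auto simp: words_over_iff_range)
  have "inj_on (g \<circ> u) I"
  proof (rule inj_onI, rule ccontr)
    fix i j assume i: "i \<in> I" and j: "j \<in> I" and same: "(g \<circ> u) i = (g \<circ> u) j" and "i \<noteq> j"
    then obtain x where x: "x \<in> words_over (nsw_alph A)"
      and differ: "(u i \<frown> x \<in> nsw_lang A) \<noteq> (u j \<frown> x \<in> nsw_lang A)"
      using fooling by blast
    show False
      using differ same word[OF i x] word[OF j x]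
        gfg_strategy_residual[OF g, of "u i" "u j" x] gfg_strategy_residual[OF g, of "u j" "u i" x]
      by auto
  qed
  moreover have "(g \<circ> u) ` I \<subseteq> nsw_states A"
  proof -
    obtain a where "a \<in> nsw_alph A"
      using alph by blast
    then have "(\<lambda>_. a) \<in> words_over (nsw_alph A)"
      by (simp add: words_over_def)
    then show ?thesis
      using gfg_strategy_state[OF wf g] word by auto
  qed
  moreover have "finite (nsw_states A)"
    using wf by (simp add: nsw_wf_def)
  ultimately show ?thesis
    by (rule card_inj_on_le)
qed

fun det_run :: "('q \<Rightarrow> 'a \<Rightarrow> 'q) \<Rightarrow> 'q \<Rightarrow> 'a word \<Rightarrow> nat \<Rightarrow> 'q" where
  "det_run \<delta> q\<^sub>0 w 0 = q\<^sub>0"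
| "det_run \<delta> q\<^sub>0 w (Suc i) = \<delta> (det_run \<delta> q\<^sub>0 w i) (w i)"

lemma det_run_closed:
  assumes "q\<^sub>0 \<in> Q" "\<And>q a. q \<in> Q \<Longrightarrow> a \<in> \<Sigma> \<Longrightarrow> \<delta> q a \<in> Q" "w \<in> words_over \<Sigma>"
  shows "det_run \<delta> q\<^sub>0 w i \<in> Q"
  using assms by (induction i) (auto simp: words_over_def)

lemma dcw_recognizable_finite_states:
  fixes \<delta> :: "'q \<Rightarrow> 'a \<Rightarrow> 'q"
  assumes "finite Q" "q\<^sub>0 \<in> Q" "\<And>q a. q \<in> Q \<Longrightarrow> a \<in> \<Sigma> \<Longrightarrow> \<delta> q a \<in> Q"
  shows "dcw_recognizable \<Sigma> {w \<in> words_over \<Sigma>. finite {i. det_run \<delta> q\<^sub>0 w i \<in> F}}"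
proof -
  let ?f = "to_nat_on Q"
  have Q: "countable Q"
    using assms(1) by (rule countable_finite)
  define D where "D = \<lparr>dcw_alph = \<Sigma>, dcw_states = ?f ` Q, dcw_init = ?f q\<^sub>0,
    dcw_delta = \<lambda>p a. ?f (\<delta> (from_nat_into Q p) a), dcw_acc = ?f ` (F \<inter> Q)\<rparr>"
  have "dcw_wf D"
    using assms Q by (auto simp: dcw_wf_def D_def)
  moreover have "dcw_run D w i \<in> dcw_acc D \<longleftrightarrow> det_run \<delta> q\<^sub>0 w i \<in> F"
    if "w \<in> words_over \<Sigma>" for w i
  proof -
    have closed: "det_run \<delta> q\<^sub>0 w j \<in> Q" for j
      using det_run_closed[OF assms(2,3) that] .
    have "dcw_run D w i = ?f (det_run \<delta> q\<^sub>0 w i)"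
      by (induction i) (simp_all add: D_def Q closed)
    then show ?thesis
      using inj_on_image_mem_iff[OF inj_on_to_nat_on[OF Q] closed] by (simp add: D_def closed)
  qed
  ultimately show ?thesis
    unfolding dcw_recognizable_def dcw_lang_def
    by (intro exI[of _ D]) (auto simp: D_def)
qed

section \<open>The echo language and a deterministic co-Buchi automaton for it\<close>

definition bits :: "nat \<Rightarrow> nat set \<Rightarrow> nat set" where
  "bits n a = a \<inter> {..<n}"

definition echo_at :: "nat \<Rightarrow> nat set word \<Rightarrow> nat \<Rightarrow> nat \<Rightarrow> bool" where
  "echo_at n w i j \<longleftrightarrow> i < j \<and> n \<in> w j \<and> (\<forall>m \<in> {i..<j}. n \<notin> w m) \<and> bits n (w i) = bits n (w j)"

definition has_echo :: "nat \<Rightarrow> nat set word \<Rightarrow> bool" where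
  "has_echo n w \<longleftrightarrow> (\<exists>i j. echo_at n w i j)"

definition echo_before :: "nat \<Rightarrow> nat set word \<Rightarrow> nat \<Rightarrow> bool" where
  "echo_before n w k \<longleftrightarrow> (\<exists>i j. j < k \<and> echo_at n w i j)"

definition block_bits :: "nat \<Rightarrow> nat set word \<Rightarrow> nat \<Rightarrow> nat set set" where
  "block_bits n w k = {bits n (w i) | i. i < k \<and> (\<forall>m \<in> {i..<k}. n \<notin> w m)}"

lemma block_bits_0: "block_bits n w 0 = {}"
  by (simp add: block_bits_def)

lemma block_bits_Suc:
  "block_bits n w (Suc k) =
     (if n \<in> w k then {} else insert (bits n (w k)) (block_bits n w k))"
  by (auto simp: block_bits_def less_Suc_eq atLeastLessThanSuc)

lemma echo_at_iff_block_bits: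
  "(\<exists>i. echo_at n w i k) \<longleftrightarrow> n \<in> w k \<and> bits n (w k) \<in> block_bits n w k"
  by (auto simp: echo_at_def block_bits_def)

lemma echo_before_0: "\<not> echo_before n w 0"
  by (simp add: echo_before_def)

lemma echo_before_Suc:
  "echo_before n w (Suc k) \<longleftrightarrow>
     echo_before n w k \<or> (n \<in> w k \<and> bits n (w k) \<in> block_bits n w k)"
  unfolding echo_before_def echo_at_iff_block_bits[symmetric] by (auto simp: less_Suc_eq)

lemma echo_before_mono: "echo_before n w k \<Longrightarrow> k \<le> k' \<Longrightarrow> echo_before n w k'"
  unfolding echo_before_def by (meson less_le_trans)

lemma has_echo_iff_finite_not_echo_before:
  "has_echo n w \<longleftrightarrow> finite {k. \<not> echo_before n w k}"
proof
  assume "has_echo n w"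
  then obtain k where "echo_before n w k"
    by (auto simp: has_echo_def echo_before_def)
  then have "{k. \<not> echo_before n w k} \<subseteq> {..<k}"
    by (auto intro: echo_before_mono simp: not_less[symmetric])
  then show "finite {k. \<not> echo_before n w k}"
    using finite_subset by blast
next
  assume "finite {k. \<not> echo_before n w k}"
  then obtain k where "echo_before n w k"
    using ex_new_if_finite[OF infinite_UNIV_nat] by blast
  then show "has_echo n w"
    by (auto simp: has_echo_def echo_before_def)
qed

fun echo_step :: "nat \<Rightarrow> nat set set option \<Rightarrow> nat set \<Rightarrow> nat set set option" where
  "echo_step n None a = None"
| "echo_step n (Some S) a =
     (if n \<notin> a then Some (insert (bits n a) S) else if bits n a \<in> S then None else Some {})"

lemma det_run_echo_step:
  "det_run (echo_step n) (Some {}) w k =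
     (if echo_before n w k then None else Some (block_bits n w k))"
  by (induction k) (auto simp: echo_before_0 block_bits_0 echo_before_Suc block_bits_Suc)

lemma dcw_recognizable_has_echo: "dcw_recognizable \<Sigma> {w \<in> words_over \<Sigma>. has_echo n w}"
proof -
  let ?Q = "insert None (Some ` Pow (Pow {..<n}))"
  have "finite ?Q" "Some {} \<in> ?Q"
    by auto
  moreover have "echo_step n q a \<in> ?Q" if "q \<in> ?Q" for q a
    using that by (auto simp: bits_def split: if_splits)
  ultimately have "dcw_recognizable \<Sigma>
      {w \<in> words_over \<Sigma>. finite {k. det_run (echo_step n) (Some {}) w k \<in> range Some}}"
    by (rule dcw_recognizable_finite_states)
  moreover have "det_run (echo_step n) (Some {}) w k \<in> range Some \<longleftrightarrow> \<not> echo_before n w k"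
    for w k
    by (simp add: det_run_echo_step)
  ultimately show ?thesis
    by (simp add: has_echo_iff_finite_not_echo_before)
qed

section \<open>An LTL formula of linear size for the echo language\<close>

definition ltl_ev :: "'ap ltl \<Rightarrow> 'ap ltl" where
  "ltl_ev f = LUntil LTrue f"

definition ltl_iff :: "'ap ltl \<Rightarrow> 'ap ltl \<Rightarrow> 'ap ltl" where
  "ltl_iff f g = LAnd (LNot (LAnd f (LNot g))) (LNot (LAnd (LNot f) g))"

fun ltl_conj_list :: "'ap ltl list \<Rightarrow> 'ap ltl" where
  "ltl_conj_list [] = LTrue"
| "ltl_conj_list (f # fs) = LAnd f (ltl_conj_list fs)"

definition ltl_at_next :: "'ap \<Rightarrow> 'ap ltl \<Rightarrow> 'ap ltl" where
  "ltl_at_next p f = LUntil (LNot (Prop p)) (LAnd (Prop p) f)"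

lemma ltl_sat_ev [simp]: "ltl_sat w (ltl_ev f) \<longleftrightarrow> (\<exists>i. ltl_sat (suffix i w) f)"
  by (simp add: ltl_ev_def suffix_w_eq_suffix)

lemma ltl_sat_iff [simp]: "ltl_sat w (ltl_iff f g) \<longleftrightarrow> (ltl_sat w f \<longleftrightarrow> ltl_sat w g)"
  by (auto simp: ltl_iff_def)

lemma ltl_sat_conj_list [simp]: "ltl_sat w (ltl_conj_list fs) \<longleftrightarrow> (\<forall>f \<in> set fs. ltl_sat w f)"
  by (induction fs) auto

lemma ltl_sat_at_next_first:
  assumes "p \<in> w k" "\<forall>j<k. p \<notin> w j"
  shows "ltl_sat w (ltl_at_next p f) \<longleftrightarrow> ltl_sat (suffix k w) f"
proof -
  have unique: "k' = k" if "p \<in> w k'" "\<forall>j<k'. p \<notin> w j" for k'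
    using that assms by (cases k' k rule: linorder_cases) auto
  have "ltl_sat w (ltl_at_next p f) \<longleftrightarrow>
      (\<exists>k'. p \<in> w k' \<and> ltl_sat (suffix k' w) f \<and> (\<forall>j<k'. p \<notin> w j))"
    by (simp add: ltl_at_next_def suffix_w_eq_suffix)
  then show ?thesis
    using unique assms by blast
qed

lemma ltl_sat_at_next_LTrue: "ltl_sat w (ltl_at_next p LTrue) \<longleftrightarrow> (\<exists>k. p \<in> w k)"
  by (simp add: ltl_at_next_def suffix_w_eq_suffix exists_least_iff[of "\<lambda>k. p \<in> w k"])

definition echo_here :: "nat \<Rightarrow> nat ltl" where
  "echo_here n = LAnd (LNot (Prop n)) (LAnd (ltl_at_next n LTrue)
     (ltl_conj_list (map (\<lambda>b. ltl_iff (Prop b) (ltl_at_next n (Prop b))) [0..<n])))"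

definition echo_formula :: "nat \<Rightarrow> nat ltl" where
  "echo_formula n = ltl_ev (echo_here n)"

lemma ltl_sat_echo_here: "ltl_sat w (echo_here n) \<longleftrightarrow> (\<exists>j. echo_at n w 0 j)"
proof
  assume sat: "ltl_sat w (echo_here n)"
  then have "\<exists>k. n \<in> w k"
    by (simp add: echo_here_def ltl_sat_at_next_LTrue)
  then obtain j where j: "n \<in> w j" "\<forall>i<j. n \<notin> w i"
    by (auto simp: exists_least_iff[of "\<lambda>k. n \<in> w k"])
  have "n \<notin> w 0" and "\<forall>b<n. b \<in> w 0 \<longleftrightarrow> b \<in> w j"
    using sat by (auto simp: echo_here_def ltl_sat_at_next_first[OF j])
  moreover from this(1) have "0 < j"
    using j(1) by (metis gr0I)
  ultimately have "echo_at n w 0 j"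
    using j by (auto simp: echo_at_def bits_def)
  then show "\<exists>j. echo_at n w 0 j" ..
next
  assume "\<exists>j. echo_at n w 0 j"
  then obtain j where echo: "echo_at n w 0 j" ..
  then have j: "n \<in> w j" "\<forall>i<j. n \<notin> w i"
    by (auto simp: echo_at_def)
  show "ltl_sat w (echo_here n)"
    using echo j
    by (auto simp: echo_here_def ltl_sat_at_next_LTrue ltl_sat_at_next_first[OF j] echo_at_def bits_def)
qed

lemma echo_at_suffix: "echo_at n (suffix i w) 0 k \<longleftrightarrow> echo_at n w i (i + k)"
proof -
  have "(\<forall>m \<in> {0..<k}. n \<notin> w (i + m)) \<longleftrightarrow> (\<forall>m \<in> {i..<i + k}. n \<notin> w m)"
    by (auto simp: le_iff_add)
  then show ?thesis
    by (simp add: echo_at_def)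
qed

lemma ltl_sat_echo_formula: "ltl_sat w (echo_formula n) \<longleftrightarrow> has_echo n w"
proof -
  have "ltl_sat w (echo_formula n) \<longleftrightarrow> (\<exists>i k. echo_at n w i (i + k))"
    by (simp add: echo_formula_def ltl_sat_echo_here echo_at_suffix)
  also have "\<dots> \<longleftrightarrow> has_echo n w"
    unfolding has_echo_def by (metis echo_at_def less_imp_add_positive)
  finally show ?thesis .
qed

lemma ltl_lang_echo_formula: "ltl_lang AP (echo_formula n) = {w \<in> words_over (Pow AP). has_echo n w}"
  by (simp add: ltl_lang_def ltl_sat_echo_formula)

lemma ltl_length_conj_list: "ltl_length (ltl_conj_list fs) = (\<Sum>f \<leftarrow> fs. ltl_length f + 1) + 1"
  by (induction fs) auto

lemma ltl_length_echo_formula: "ltl_length (echo_formula n) = 22 * n + 13"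
  by (simp add: echo_formula_def echo_here_def ltl_ev_def ltl_iff_def ltl_at_next_def
      ltl_length_conj_list comp_def sum_list_triv)

lemma ltl_props_echo_formula: "ltl_props (echo_formula n) = {..n}"
proof -
  have "ltl_props (ltl_conj_list fs) = \<Union>(ltl_props ` set fs)" for fs :: "nat ltl list"
    by (induction fs) auto
  then show ?thesis
    by (auto simp: echo_formula_def echo_here_def ltl_ev_def ltl_iff_def ltl_at_next_def
        atLeast0LessThan le_less)
qed

section \<open>Lower bound for good-for-games Streett automata\<close>

lemma has_echo_probe:
  assumes u: "set u \<subseteq> Pow {..<n}" and v: "v \<subseteq> {..<n}"
  shows "has_echo n (u \<frown> (insert n v ## (\<lambda>_. {n}))) \<longleftrightarrow> v \<in> set u"
proof -
  let ?w = "u \<frown> (insert n v ## (\<lambda>_. {n}))"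
  have letter: "?w i = (if i < length u then u ! i else if i = length u then insert n v else {n})"
    for i
    by (cases "i - length u") auto
  have entry: "u ! i \<subseteq> {..<n}" if "i < length u" for i
    using u nth_mem[OF that] by auto
  then have bits_u: "bits n (u ! i) = u ! i" if "i < length u" for i
    using that by (auto simp: bits_def)
  have unmarked: "n \<notin> u ! i" if "i < length u" for i
    using entry[OF that] by auto
  have marked: "n \<in> ?w i \<longleftrightarrow> length u \<le> i" for i
    using unmarked by (auto simp: letter)
  have "echo_at n ?w i j \<longleftrightarrow> i < length u \<and> j = length u \<and> u ! i = v" for i j
  proof
    assume echo: "echo_at n ?w i j"
    then have "i < length u" "length u \<le> j" "\<forall>m \<in> {i..<j}. m < length u"
      unfolding echo_at_def marked by (auto dest: bspec[of _ _ i])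
    then have "j = length u"
      by (metis atLeastLessThan_iff le_neq_implies_less less_imp_le_nat less_irrefl)
    moreover have "bits n (u ! i) = bits n (insert n v)"
      using echo \<open>i < length u\<close> \<open>j = length u\<close> by (simp add: echo_at_def letter)
    ultimately show "i < length u \<and> j = length u \<and> u ! i = v"
      using v \<open>i < length u\<close> bits_u by (auto simp: bits_def)
  next
    assume "i < length u \<and> j = length u \<and> u ! i = v"
    then show "echo_at n ?w i j"
      unfolding echo_at_def marked using v by (auto simp: letter bits_def)
  qed
  then have "has_echo n ?w \<longleftrightarrow> (\<exists>i < length u. u ! i = v)"
    by (auto simp: has_echo_def)
  then show ?thesis
    by (simp add: in_set_conv_nth)
qed

lemma gfg_nsw_card_has_echo:
  assumes wf: "nsw_wf A" and alph: "Pow {..n} \<subseteq> nsw_alph A" and gfg: "nsw_gfg A"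
    and lang: "nsw_lang A = {w \<in> words_over (nsw_alph A). has_echo n w}"
  shows "2 ^ 2 ^ n \<le> card (nsw_states A)"
proof -
  obtain g where g: "gfg_strategy A g"
    using gfg by (auto simp: nsw_gfg_iff_strategy)
  let ?P = "Pow (Pow {..<n})"
  have "\<forall>S \<in> ?P. \<exists>u. set u = S"
    by (metis PowD finite_Pow_iff finite_lessThan finite_list finite_subset)
  then obtain enum where enum: "\<And>S. S \<in> ?P \<Longrightarrow> set (enum S) = S"
    by metis
  have letter: "a \<in> nsw_alph A" if "a \<subseteq> {..n}" for a
    using that alph by blast
  have enum_alph: "set (enum S) \<subseteq> nsw_alph A" if "S \<in> ?P" for S
  proof
    fix a assume "a \<in> set (enum S)"
    then have "a \<subseteq> {..<n}"
      using that enum by auto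
    then show "a \<in> nsw_alph A"
      by (auto intro!: letter)
  qed
  have suffix_word: "insert n v ## (\<lambda>_. {n}) \<in> words_over (nsw_alph A)" if "v \<subseteq> {..<n}" for v
  proof -
    have "insert n v \<subseteq> {..n}" "{n} \<subseteq> {..n}"
      using that by auto
    then show ?thesis
      using letter by (auto simp: words_over_iff_range)
  qed
  have probe: "enum S \<frown> (insert n v ## (\<lambda>_. {n})) \<in> nsw_lang A \<longleftrightarrow> v \<in> S"
    if "S \<in> ?P" "v \<subseteq> {..<n}" for S v
  proof -
    have "enum S \<frown> (insert n v ## (\<lambda>_. {n})) \<in> words_over (nsw_alph A)"
      using enum_alph[OF that(1)] suffix_word[OF that(2)] by (simp add: words_over_iff_range)
    then show ?thesis
      using that lang has_echo_probe by (simp add: enum)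
  qed
  have "card ?P \<le> card (nsw_states A)"
  proof (rule gfg_card_states_ge_fooling_set[OF wf g _ enum_alph])
    show "nsw_alph A \<noteq> {}"
      using alph by blast
    fix S T assume S: "S \<in> ?P" and T: "T \<in> ?P" and "S \<noteq> T"
    then obtain v where v: "v \<subseteq> {..<n}" "v \<in> S \<longleftrightarrow> v \<notin> T"
      by blast
    with probe[OF S v(1)] probe[OF T v(1)] suffix_word[OF v(1)]
    show "\<exists>x \<in> words_over (nsw_alph A).
        (enum S \<frown> x \<in> nsw_lang A) \<noteq> (enum T \<frown> x \<in> nsw_lang A)"
      by blast
  qed
  then show ?thesis
    by (simp add: card_Pow)
qed

theorem corollary24:
  shows "\<exists>(\<phi> :: nat \<Rightarrow> nat ltl) (AP :: nat \<Rightarrow> nat set) (c :: nat) (k :: nat).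
     \<forall>n. finite (AP n) \<and> ltl_props (\<phi> n) \<subseteq> AP n
       \<and> ltl_length (\<phi> n) \<le> c * (n + 1) ^ k
       \<and> dcw_recognizable (Pow (AP n)) (ltl_lang (AP n) (\<phi> n))
       \<and> (\<forall>A :: nat set nsw. nsw_wf A \<and> nsw_alph A = Pow (AP n) \<and> nsw_gfg A
             \<and> nsw_lang A = ltl_lang (AP n) (\<phi> n)
           \<longrightarrow> card (nsw_states A) \<ge> 2 ^ (2 ^ n))"
proof (rule exI[of _ echo_formula], rule exI[of _ "\<lambda>n. {..n}"], rule exI[of _ 35], rule exI[of _ 1],
    intro allI conjI)
  fix n :: nat
  show "finite {..n}"
    by simp
  show "ltl_props (echo_formula n) \<subseteq> {..n}"
    by (simp add: ltl_props_echo_formula)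
  show "ltl_length (echo_formula n) \<le> 35 * (n + 1) ^ 1"
    by (simp add: ltl_length_echo_formula)
  show "dcw_recognizable (Pow {..n}) (ltl_lang {..n} (echo_formula n))"
    by (simp add: ltl_lang_echo_formula dcw_recognizable_has_echo)
  show "nsw_wf A \<and> nsw_alph A = Pow {..n} \<and> nsw_gfg A \<and> nsw_lang A = ltl_lang {..n} (echo_formula n)
      \<longrightarrow> 2 ^ 2 ^ n \<le> card (nsw_states A)" for A :: "nat set nsw"
    by (auto intro: gfg_nsw_card_has_echo simp: ltl_lang_echo_formula)
qed

end
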